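(* Let $n\geq1$ and $p,q>1$ satisfy \[ \frac{p+1}{pq-1}>\frac{n-1}{2},\qquad \frac{n-1}{2}(q-1)<1 . \] Let $\varepsilon>0$ and $C>0$. Then there do not exist $H\in C^1(\mathbb{R}_+)$ and $G\in C^2(\mathbb{R}_+)$ satisfying, for all $t\geq0$, \[ H'(t)\geq C\langle t\rangle^{-\frac{n-1}{2}(q-1)}G(t)^q,\quad H(t)\geq0,\quad H'(t)\geq0, \] \[ G''(t)+2G'(t)\geq C\langle t\rangle^{-\frac{n-1}{2}(p-1)}H(t)^p,\quad G(t)\geq C\varepsilon,\quad G'(t)\geq0 . \]
   Context: $\langle t\rangle:=\sqrt{1+t^2}$, $\mathbb{R}_+=[0,\infty)$. *)

theory Defs
  imports "HOL-Analysis.Analysis"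
begin

definition jb :: "real \<Rightarrow> real" where
  "jb t = sqrt (1 + t\<^sup>2)"

end

theory Submission
  imports Defs
begin

(* On a window [0, 2T] the weights <t> powr (-gamma) are at least (3T) powr (-gamma), so (H, G)
   satisfies a system with constant coefficients c1, c2, and already H(T) >= T c1 (C eps)^q.
   On [T, 7T/4] one runs an iteration with steps 3 delta_k, delta_k = T / (8 * 2^k): H^p drives
   G'' + 2 G', hence G' (after damping), then G, then H', which gives
   ln H(t_(k+1)) >= pq ln H(t_k) - B - M k.  As pq > 1 this makes H unbounded on [0, 2T] unless
   (pq - 1) ln H(T) <= B + M / (pq - 1).  Both sides are affine in ln T, and the difference has
   slope q (p + 1 - (n - 1)/2 (pq - 1)) > 0, so the inequality fails for large T. *)

lemma increment_ge_of_deriv_ge: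
  fixes f f' :: "real \<Rightarrow> real"
  assumes "s \<le> t" "{s..t} \<subseteq> S"
    and deriv: "\<And>x. x \<in> {s..t} \<Longrightarrow> (f has_real_derivative f' x) (at x within S)"
    and bound: "\<And>x. x \<in> {s..t} \<Longrightarrow> m \<le> f' x"
  shows "m * (t - s) \<le> f t - f s"
proof -
  have deriv_Icc: "(f has_derivative (*) (f' x)) (at x within {s..t})" if "s \<le> x" "x \<le> t" for x
    using deriv[of x] that assms(2)
    by (auto simp: has_field_derivative_def intro: has_derivative_subset)
  obtain x where "x \<in> {s..t}" "f t - f s = f' x * (t - s)"
    using mvt_very_simple[OF \<open>s \<le> t\<close> deriv_Icc] by auto
  then show ?thesis
    using bound[of x] \<open>s \<le> t\<close> by (simp add: mult_right_mono)
qed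

lemma damped_deriv_lower_bound:
  fixes g g' :: "real \<Rightarrow> real"
  assumes "s \<le> u" "u - s \<le> 1" "{s..u} \<subseteq> S" "0 \<le> F" "0 \<le> g s"
    and deriv: "\<And>x. x \<in> {s..u} \<Longrightarrow> (g has_real_derivative g' x) (at x within S)"
    and ineq: "\<And>x. x \<in> {s..u} \<Longrightarrow> F \<le> g' x + 2 * g x"
  shows "exp (-2) * F * (u - s) \<le> g u"
proof -
  define K where "K x = exp (2 * x) * g x" for x
  have K_deriv: "(K has_real_derivative exp (2 * x) * (g' x + 2 * g x)) (at x within S)"
    if "x \<in> {s..u}" for x
    unfolding K_def
    by (rule derivative_eq_intros deriv[OF that] | simp add: algebra_simps)+
  have "exp (2 * s) * F * (u - s) \<le> K u - K s"
  proof (rule increment_ge_of_deriv_ge[OF assms(1,3) K_deriv])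
    fix x assume "x \<in> {s..u}"
    then show "exp (2 * s) * F \<le> exp (2 * x) * (g' x + 2 * g x)"
      using ineq[of x] \<open>0 \<le> F\<close> by (intro mult_mono) auto
  qed
  also have "\<dots> \<le> exp (2 * u) * g u"
    using \<open>0 \<le> g s\<close> unfolding K_def by simp
  finally have "exp (2 * (s - u)) * (F * (u - s)) \<le> g u"
    by (simp add: exp_diff field_simps)
  moreover have "exp (-2) * (F * (u - s)) \<le> exp (2 * (s - u)) * (F * (u - s))"
    using assms(1,2,4) by (intro mult_right_mono) auto
  ultimately show ?thesis
    by (simp add: mult.assoc)
qed

lemma unbounded_of_superlinear_recurrence:
  fixes y :: "nat \<Rightarrow> real"
  assumes "1 < r" "0 < M"
    and rec: "\<And>k. r * y k - B - M * k \<le> y (Suc k)"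
    and start: "B + M / (r - 1) \<le> (r - 1) * y 0"
  shows "\<not> bdd_above (range y)"
proof
  define E where "E = M / (r - 1)"
  define D where "D = (B + E) / (r - 1)"
  \<comment> \<open>D + E k solves the recurrence with equality.\<close>
  have linear: "D + E * k \<le> y k" for k
  proof (induction k)
    case 0
    show ?case
      using start \<open>1 < r\<close> by (simp add: D_def E_def divide_le_eq mult.commute)
  next
    case (Suc k)
    have "r * D - B = D + E"
      using \<open>1 < r\<close> by (simp add: D_def field_simps)
    moreover have "r * E - M = E"
      using \<open>1 < r\<close> by (simp add: E_def field_simps)
    ultimately have "D + E * Suc k = (r * D - B) + (r * E - M) * k"
      by (simp add: algebra_simps)
    also have "\<dots> = r * (D + E * k) - B - M * k"
      by (simp add: algebra_simps)
    also have "\<dots> \<le> r * y k - B - M * k"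
      using Suc \<open>1 < r\<close> by simp
    also have "\<dots> \<le> y (Suc k)"
      by (rule rec)
    finally show ?case .
  qed
  assume "bdd_above (range y)"
  then obtain Y where "y k \<le> Y" for k
    by (auto simp: bdd_above_def)
  moreover obtain k :: nat where "Y - D < k * E"
    using ex_less_of_nat_mult[of E "Y - D"] assms(1,2) by (auto simp: E_def)
  ultimately show False
    using linear[of k] by (smt (verit) mult.commute)
qed

lemma one_le_jb: "1 \<le> jb t"
  unfolding jb_def by simp

lemma jb_le_one_plus_abs: "jb t \<le> 1 + \<bar>t\<bar>"
  unfolding jb_def by (rule real_le_lsqrt) (auto simp: power2_eq_square algebra_simps)

locale monotone_system =
  fixes H H' G G' G'' :: "real \<Rightarrow> real"
  assumes H_deriv: "\<And>t. 0 \<le> t \<Longrightarrow> (H has_real_derivative H' t) (at t within {0..})"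
    and G_deriv: "\<And>t. 0 \<le> t \<Longrightarrow> (G has_real_derivative G' t) (at t within {0..})"
    and G'_deriv: "\<And>t. 0 \<le> t \<Longrightarrow> (G' has_real_derivative G'' t) (at t within {0..})"
    and H_nonneg: "\<And>t. 0 \<le> t \<Longrightarrow> 0 \<le> H t"
    and H'_nonneg: "\<And>t. 0 \<le> t \<Longrightarrow> 0 \<le> H' t"
    and G_nonneg: "\<And>t. 0 \<le> t \<Longrightarrow> 0 \<le> G t"
    and G'_nonneg: "\<And>t. 0 \<le> t \<Longrightarrow> 0 \<le> G' t"
begin

lemma H_mono: "0 \<le> s \<Longrightarrow> s \<le> t \<Longrightarrow> H s \<le> H t"
  using increment_ge_of_deriv_ge[of s t "{0..}" H H' 0] H_deriv H'_nonneg by auto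

lemma G_mono: "0 \<le> s \<Longrightarrow> s \<le> t \<Longrightarrow> G s \<le> G t"
  using increment_ge_of_deriv_ge[of s t "{0..}" G G' 0] G_deriv G'_nonneg by auto

lemma H_ge_of_deriv_ge:
  "0 \<le> s \<Longrightarrow> s \<le> t \<Longrightarrow> (\<And>x. x \<in> {s..t} \<Longrightarrow> m \<le> H' x) \<Longrightarrow> m * (t - s) \<le> H t"
  using increment_ge_of_deriv_ge[of s t "{0..}" H H' m] H_deriv H_nonneg[of s] by force

lemma G_ge_of_deriv_ge:
  "0 \<le> s \<Longrightarrow> s \<le> t \<Longrightarrow> (\<And>x. x \<in> {s..t} \<Longrightarrow> m \<le> G' x) \<Longrightarrow> m * (t - s) \<le> G t"
  using increment_ge_of_deriv_ge[of s t "{0..}" G G' m] G_deriv G_nonneg[of s] by force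

lemma G'_ge_of_forcing:
  assumes "0 < c2" "0 < p"
    and G''_ge: "\<And>t. t \<in> {0..L} \<Longrightarrow> c2 * H t powr p \<le> G'' t + 2 * G' t"
    and "0 \<le> v" "0 < \<eta>" "\<eta> \<le> 1" "v + \<eta> \<le> w" "w \<le> L"
  shows "exp (-2) * (c2 * H v powr p) * \<eta> \<le> G' w"
proof -
  have "exp (-2) * (c2 * H v powr p) * (w - (w - \<eta>)) \<le> G' w"
  proof (rule damped_deriv_lower_bound[where S = "{0..}" and g' = G''])
    fix x assume x: "x \<in> {w - \<eta>..w}"
    have "c2 * H v powr p \<le> c2 * H x powr p"
      using H_mono[of v x] H_nonneg[of v] x assms by (intro mult_left_mono powr_mono2) auto
    also have "\<dots> \<le> G'' x + 2 * G' x"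
      using G''_ge[of x] x assms by auto
    finally show "c2 * H v powr p \<le> G'' x + 2 * G' x" .
  qed (use assms G'_deriv G'_nonneg H_nonneg in auto)
  then show ?thesis
    by simp
qed

lemma H_ge_of_forcing:
  assumes "0 < c1" "0 < q"
    and H'_ge: "\<And>t. t \<in> {0..L} \<Longrightarrow> c1 * G t powr q \<le> H' t"
    and "0 \<le> s" "s \<le> t" "t \<le> L"
  shows "c1 * G s powr q * (t - s) \<le> H t"
proof (rule H_ge_of_deriv_ge)
  fix x assume x: "x \<in> {s..t}"
  have "c1 * G s powr q \<le> c1 * G x powr q"
    using G_mono[of s x] G_nonneg[of s] x assms by (intro mult_left_mono powr_mono2) auto
  also have "\<dots> \<le> H' x"
    using H'_ge[of x] x assms by auto
  finally show "c1 * G s powr q \<le> H' x" .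
qed (use assms in auto)

lemma growth_step:
  assumes "0 < c1" "0 < c2" "0 < p" "0 < q"
    and H'_ge: "\<And>t. t \<in> {0..L} \<Longrightarrow> c1 * G t powr q \<le> H' t"
    and G''_ge: "\<And>t. t \<in> {0..L} \<Longrightarrow> c2 * H t powr p \<le> G'' t + 2 * G' t"
    and "0 \<le> v" "0 < \<eta>" "\<eta> \<le> \<delta>" "\<eta> \<le> 1" "v + 3 * \<delta> \<le> L"
  shows "\<delta> * c1 * (\<delta> * \<eta> * exp (-2) * c2 * H v powr p) powr q \<le> H (v + 3 * \<delta>)"
proof -
  have "exp (-2) * (c2 * H v powr p) * \<eta> * ((v + 2 * \<delta>) - (v + \<delta>)) \<le> G (v + 2 * \<delta>)"
    using assms by (intro G_ge_of_deriv_ge G'_ge_of_forcing[where L = L] G''_ge) auto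
  then have "\<delta> * \<eta> * exp (-2) * c2 * H v powr p \<le> G (v + 2 * \<delta>)"
    by (simp add: algebra_simps)
  then have "\<delta> * c1 * (\<delta> * \<eta> * exp (-2) * c2 * H v powr p) powr q \<le> \<delta> * c1 * G (v + 2 * \<delta>) powr q"
    using H_nonneg[of v] assms by (intro mult_left_mono powr_mono2) auto
  also have "\<dots> = c1 * G (v + 2 * \<delta>) powr q * ((v + 3 * \<delta>) - (v + 2 * \<delta>))"
    by (simp add: algebra_simps)
  also have "\<dots> \<le> H (v + 3 * \<delta>)"
    using assms by (intro H_ge_of_forcing[OF assms(1,4) H'_ge]) auto
  finally show ?thesis .
qed

lemma log_growth_step:
  assumes "0 < c1" "0 < c2" "0 < p" "0 < q" "1 \<le> \<delta>"
    and H'_ge: "\<And>t. t \<in> {0..L} \<Longrightarrow> c1 * G t powr q \<le> H' t"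
    and G''_ge: "\<And>t. t \<in> {0..L} \<Longrightarrow> c2 * H t powr p \<le> G'' t + 2 * G' t"
    and "0 \<le> v" "v + 3 * (\<delta> / 2 ^ k) \<le> L" "0 < H v"
  shows "p * q * ln (H v) + (1 + q) * ln \<delta> + ln c1 + q * (ln c2 - 2) - (1 + 2 * q) * ln 2 * k
    \<le> ln (H (v + 3 * (\<delta> / 2 ^ k)))"
proof -
  define R where "R = \<delta> / 2 ^ k * c1 * (\<delta> / 2 ^ k * (1 / 2 ^ k) * exp (-2) * c2 * H v powr p) powr q"
  have "1 / 2 ^ k \<le> \<delta> / 2 ^ k"
    using assms by (intro divide_right_mono) auto
  then have "R \<le> H (v + 3 * (\<delta> / 2 ^ k))"
    unfolding R_def using assms by (intro growth_step[where L = L] H'_ge G''_ge) auto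
  moreover have "0 < R"
    using assms by (simp add: R_def)
  ultimately have "ln R \<le> ln (H (v + 3 * (\<delta> / 2 ^ k)))"
    by simp
  moreover have "ln R = p * q * ln (H v) + (1 + q) * ln \<delta> + ln c1 + q * (ln c2 - 2) - (1 + 2 * q) * ln 2 * k"
    using assms by (simp add: R_def ln_mult ln_div ln_realpow ln_powr algebra_simps)
  ultimately show ?thesis
    by simp
qed

lemma lifespan_bound:
  assumes "0 < c1" "0 < c2" "0 < g0" "0 < p" "0 < q" "1 < p * q" "8 \<le> T"
    and H'_ge: "\<And>t. t \<in> {0..2 * T} \<Longrightarrow> c1 * G t powr q \<le> H' t"
    and G''_ge: "\<And>t. t \<in> {0..2 * T} \<Longrightarrow> c2 * H t powr p \<le> G'' t + 2 * G' t"
    and G_ge: "g0 \<le> G 0"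
  shows "(p * q - 1) * ln (T * c1 * g0 powr q)
    < (1 + 2 * q) * ln 2 / (p * q - 1) - ((1 + q) * ln (T / 8) + ln c1 + q * (ln c2 - 2))"
proof (rule ccontr)
  define r where "r = p * q"
  define M where "M = (1 + 2 * q) * ln 2"
  define B where "B = - ((1 + q) * ln (T / 8) + ln c1 + q * (ln c2 - 2))"
  assume "\<not> ?thesis"
  then have large_start: "B + M / (r - 1) \<le> (r - 1) * ln (T * c1 * g0 powr q)"
    by (simp add: r_def M_def B_def)
  have "T * c1 * g0 powr q \<le> T * c1 * G 0 powr q"
    using G_ge assms by (intro mult_left_mono powr_mono2) auto
  also have "\<dots> = c1 * G 0 powr q * (T - 0)"
    by (simp add: algebra_simps)
  also have "\<dots> \<le> H T"
    using assms by (intro H_ge_of_forcing[OF assms(1,5) H'_ge]) auto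
  finally have H_T: "T * c1 * g0 powr q \<le> H T" .
  have H_T_pos: "0 < T * c1 * g0 powr q"
    using assms by simp
  define \<delta> where "\<delta> k = T / 8 / 2 ^ k" for k :: nat
  define t where "t k = T + 6 * (\<delta> 0 - \<delta> k)" for k
  define y where "y k = ln (H (t k))" for k
  have \<delta>_pos: "0 < \<delta> k" and \<delta>_le: "\<delta> k \<le> \<delta> 0" for k
    using assms by (simp_all add: \<delta>_def divide_le_eq)
  have t_ge: "T \<le> t k" and t_le: "t k \<le> 2 * T" for k
    using \<delta>_pos[of k] \<delta>_le[of k] assms by (auto simp: t_def \<delta>_def[of 0])
  have t_Suc: "t (Suc k) = t k + 3 * \<delta> k" for k
    by (simp add: t_def \<delta>_def field_simps)
  have H_t_pos: "0 < H (t k)" for k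
    using H_mono[of T "t k"] t_ge[of k] H_T H_T_pos assms by linarith
  have rec: "r * y k - B - M * k \<le> y (Suc k)" for k
    using log_growth_step[of c1 c2 p q "T / 8" "2 * T" "t k" k] assms t_ge[of k] t_le[of "Suc k"] H_t_pos[of k]
    by (simp add: y_def t_Suc \<delta>_def r_def B_def M_def H'_ge G''_ge algebra_simps)
  have "\<not> bdd_above (range y)"
  proof (rule unbounded_of_superlinear_recurrence[OF _ _ rec])
    show "1 < r" "0 < M"
      using assms by (simp_all add: r_def M_def)
    have "ln (T * c1 * g0 powr q) \<le> y 0"
      using H_T H_T_pos by (simp add: y_def t_def)
    with large_start \<open>1 < r\<close> show "B + M / (r - 1) \<le> (r - 1) * y 0"
      by (smt (verit) mult_left_mono)
  qed
  moreover have "y k \<le> ln (H (2 * T))" for k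
    using H_mono[of "t k" "2 * T"] t_ge[of k] t_le[of k] H_t_pos[of k] assms by (simp add: y_def)
  ultimately show False
    by (auto simp: bdd_above_def)
qed

lemma weighted_lifespan_bound:
  assumes "0 \<le> \<alpha>" "0 \<le> \<beta>" "0 < p" "0 < q" "1 < p * q" "0 < C" "0 < g0" "8 \<le> T"
    and H'_ge: "\<And>t. 0 \<le> t \<Longrightarrow> C * jb t powr (- \<alpha>) * G t powr q \<le> H' t"
    and G''_ge: "\<And>t. 0 \<le> t \<Longrightarrow> C * jb t powr (- \<beta>) * H t powr p \<le> G'' t + 2 * G' t"
    and G_ge: "g0 \<le> G 0"
  shows "(p * q - 1) * (ln T + ln C - \<alpha> * ln (3 * T) + q * ln g0)
      + (1 + q) * ln (T / 8) + ln C - \<alpha> * ln (3 * T) + q * (ln C - \<beta> * ln (3 * T) - 2)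
    < (1 + 2 * q) * ln 2 / (p * q - 1)"
proof -
  have weight_ge: "C * (3 * T) powr (- \<gamma>) \<le> C * jb t powr (- \<gamma>)"
    if "t \<in> {0..2 * T}" "0 \<le> \<gamma>" for t \<gamma>
    using that assms one_le_jb[of t] jb_le_one_plus_abs[of t]
    by (intro mult_left_mono powr_mono2') auto
  define c1 where "c1 = C * (3 * T) powr (- \<alpha>)"
  define c2 where "c2 = C * (3 * T) powr (- \<beta>)"
  have "(p * q - 1) * ln (T * c1 * g0 powr q)
    < (1 + 2 * q) * ln 2 / (p * q - 1) - ((1 + q) * ln (T / 8) + ln c1 + q * (ln c2 - 2))"
  proof (rule lifespan_bound)
    fix t assume t: "t \<in> {0..2 * T}"
    have "c1 * G t powr q \<le> C * jb t powr (- \<alpha>) * G t powr q"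
      unfolding c1_def using weight_ge[OF t \<open>0 \<le> \<alpha>\<close>] by (rule mult_right_mono) simp
    also have "\<dots> \<le> H' t"
      using H'_ge t by simp
    finally show "c1 * G t powr q \<le> H' t" .
    have "c2 * H t powr p \<le> C * jb t powr (- \<beta>) * H t powr p"
      unfolding c2_def using weight_ge[OF t \<open>0 \<le> \<beta>\<close>] by (rule mult_right_mono) simp
    also have "\<dots> \<le> G'' t + 2 * G' t"
      using G''_ge t by simp
    finally show "c2 * H t powr p \<le> G'' t + 2 * G' t" .
  qed (use assms G_ge in \<open>simp_all add: c1_def c2_def\<close>)
  moreover have "ln (T * c1 * g0 powr q) = ln T + ln C - \<alpha> * ln (3 * T) + q * ln g0"
    using assms by (simp add: c1_def ln_mult ln_powr)
  moreover have "ln c1 = ln C - \<alpha> * ln (3 * T)" "ln c2 = ln C - \<beta> * ln (3 * T)"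
    using assms by (simp_all add: c1_def c2_def ln_mult ln_powr)
  ultimately show ?thesis
    by simp
qed

lemma no_global_weighted_solution:
  assumes "0 \<le> a" "1 < p" "1 < q" "a * (p * q - 1) < p + 1" "0 < C" "0 < g0"
    and H'_ge: "\<And>t. 0 \<le> t \<Longrightarrow> C * jb t powr (- (a * (q - 1))) * G t powr q \<le> H' t"
    and G''_ge: "\<And>t. 0 \<le> t \<Longrightarrow> C * jb t powr (- (a * (p - 1))) * H t powr p \<le> G'' t + 2 * G' t"
    and G_ge: "g0 \<le> G 0"
  shows False
proof -
  define \<alpha> where "\<alpha> = a * (q - 1)"
  define \<beta> where "\<beta> = a * (p - 1)"
  define \<Phi> where "\<Phi> l = (p * q - 1) * (l + ln C - \<alpha> * (ln 3 + l) + q * ln g0)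
      + (1 + q) * (l - ln 8) + ln C - \<alpha> * (ln 3 + l) + q * (ln C - \<beta> * (ln 3 + l) - 2)
      - (1 + 2 * q) * ln 2 / (p * q - 1)" for l
  \<comment> \<open>\<open>\<Phi> (ln T)\<close> is the gap in \<open>weighted_lifespan_bound\<close>; its slope \<open>\<kappa>\<close> is
    positive by the hypothesis \<open>a * (p * q - 1) < p + 1\<close>.\<close>
  define \<kappa> where "\<kappa> = q * (p + 1 - a * (p * q - 1))"
  have "1 < p * q"
    using assms(2,3) by (rule less_1_mult)
  have \<Phi>_neg: "\<Phi> (ln T) < 0" if "8 \<le> T" for T
    using weighted_lifespan_bound[of \<alpha> \<beta> p q C g0 T] assms that \<open>1 < p * q\<close>
    by (simp add: \<Phi>_def \<alpha>_def \<beta>_def ln_mult ln_div)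
  have \<Phi>_affine: "\<Phi> l = \<Phi> 0 + \<kappa> * l" for l
    by (simp add: \<Phi>_def \<kappa>_def \<alpha>_def \<beta>_def algebra_simps)
  have "0 < \<kappa>"
    using assms by (simp add: \<kappa>_def)
  define l where "l = max (ln 8) (- \<Phi> 0 / \<kappa>)"
  have "- \<Phi> 0 / \<kappa> \<le> l"
    unfolding l_def by (rule max.cobounded2)
  with \<open>0 < \<kappa>\<close> have "0 \<le> \<Phi> l"
    using \<Phi>_affine[of l] by (simp add: field_simps)
  moreover have "8 \<le> exp l"
    using exp_le_cancel_iff[of "ln 8" l] by (simp add: l_def)
  ultimately show False
    using \<Phi>_neg[of "exp l"] by simp
qed

end

theorem lemma5p3:
  fixes n :: nat and p q \<epsilon> C :: real
  assumes "n \<ge> 1" and "p > 1" and "q > 1"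
    and "(p + 1) / (p * q - 1) > (real n - 1) / 2"
    and "(real n - 1) / 2 * (q - 1) < 1"
    and "\<epsilon> > 0" and "C > 0"
  shows "\<not> (\<exists>H H' G G' G'' :: real \<Rightarrow> real.
      (\<forall>t\<ge>0. (H has_real_derivative H' t) (at t within {0..})) \<and>
      continuous_on {0..} H' \<and>
      (\<forall>t\<ge>0. (G has_real_derivative G' t) (at t within {0..})) \<and>
      (\<forall>t\<ge>0. (G' has_real_derivative G'' t) (at t within {0..})) \<and>
      continuous_on {0..} G'' \<and>
      (\<forall>t\<ge>0.
         H' t \<ge> C * jb t powr (- ((real n - 1) / 2 * (q - 1))) * G t powr q \<and>
         H t \<ge> 0 \<and> H' t \<ge> 0 \<and>
         G'' t + 2 * G' t \<ge> C * jb t powr (- ((real n - 1) / 2 * (p - 1))) * H t powr p \<and>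
         G t \<ge> C * \<epsilon> \<and> G' t \<ge> 0))"
proof (intro notI, elim exE conjE, goal_cases)
  case (1 H H' G G' G'')
  have bounds: "C * jb t powr (- ((real n - 1) / 2 * (q - 1))) * G t powr q \<le> H' t"
      "0 \<le> H t" "0 \<le> H' t"
      "C * jb t powr (- ((real n - 1) / 2 * (p - 1))) * H t powr p \<le> G'' t + 2 * G' t"
      "C * \<epsilon> \<le> G t" "0 \<le> G' t"
    if "0 \<le> t" for t
    using 1(6) that by blast+
  have "0 \<le> G t" if "0 \<le> t" for t
    using bounds(5)[OF that] assms(6,7) by (smt (verit) mult_pos_pos)
  with 1(1,3,4) bounds interpret monotone_system H H' G G' G''
    by unfold_locales simp_all
  have "0 < p * q - 1"
    using less_1_mult[OF assms(2,3)] by simp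
  with assms(4) have "(real n - 1) / 2 * (p * q - 1) < p + 1"
    by (simp add: pos_less_divide_eq)
  with assms(1-3,6,7) bounds show False
    by (intro no_global_weighted_solution[of "(real n - 1) / 2" p q C "C * \<epsilon>"]) simp_all
qed

end
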